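(* Let $\mathcal Q$ be the mean-zero Gaussian field on $\mathbb T^2$ with covariance $\mathbf E[\mathcal Q(x)\mathcal Q(y)]=G(x-y)$. Then for every $\kappa>0$ and $p\ge1$, $\mathbf E\|\mathcal Q\|_{\mathbf C^{-\kappa}}^p\lesssim1$.
   Context: $\mathbf m>0$; $C=(\mathbf m-\Delta)^{-1}$ is the Green's function kernel on $\mathbb T^2$, $C^2$ its pointwise square, and $G$ is determined by $C^2*G+G=2C^2$ (equivalently $\widehat G=2\widehat{C^2}/(1+\widehat{C^2})$ in Fourier variables). $\mathbf C^{-\kappa}=B^{-\kappa}_{\infty,\infty}(\mathbb T^2)$. *)

theory Defs
  imports "HOL-Probability.Probability"
begin

text \<open>Torus T^2 = R^2/Z^2 (unit volume), characters e_k(x) = exp(2 pi i k.x), k in Z^2.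
  Fourier coefficients: f^(k) = integral over T^2 of f e_{-k}.\<close>

definition zneg :: "int \<times> int \<Rightarrow> int \<times> int" where
  "zneg k = (- fst k, - snd k)"

definition zsub :: "int \<times> int \<Rightarrow> int \<times> int \<Rightarrow> int \<times> int" where
  "zsub k l = (fst k - fst l, snd k - snd l)"

definition zsq :: "int \<times> int \<Rightarrow> real" where
  "zsq k = real_of_int (fst k)^2 + real_of_int (snd k)^2"

text \<open>Fourier coefficients of the Green's function C = (m - Laplacian)^{-1}.\<close>
definition Chat :: "real \<Rightarrow> int \<times> int \<Rightarrow> real" where
  "Chat m k = 1 / (m + 4 * pi^2 * zsq k)"

text \<open>Fourier coefficients of the pointwise square C^2 (convolution of coefficients).\<close>
definition C2hat :: "real \<Rightarrow> int \<times> int \<Rightarrow> real" where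
  "C2hat m k = infsum (\<lambda>l. Chat m l * Chat m (zsub k l)) UNIV"

text \<open>Fourier coefficients of G, determined by C^2 * G + G = 2 C^2.\<close>
definition Ghat :: "real \<Rightarrow> int \<times> int \<Rightarrow> real" where
  "Ghat m k = 2 * C2hat m k / (1 + C2hat m k)"

text \<open>C-infinity functions on R^2: continuous, and all partial derivatives exist and are
  again C-infinity (coinductively: partial derivatives of all orders exist and are continuous).\<close>
coinductive smooth_fn :: "(real \<times> real \<Rightarrow> real) \<Rightarrow> bool" where
  "continuous_on UNIV f \<Longrightarrow>
   (\<forall>b\<in>(Basis :: (real \<times> real) set). \<exists>g. (\<forall>x. ((\<lambda>t. f (x + t *\<^sub>R b)) has_real_derivative g x) (at 0))
        \<and> smooth_fn g) \<Longrightarrow> smooth_fn f"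

definition dyadic_pou :: "(real \<times> real \<Rightarrow> real) \<Rightarrow> (real \<times> real \<Rightarrow> real) \<Rightarrow> bool" where
  "dyadic_pou chi rho \<longleftrightarrow>
     smooth_fn chi \<and> smooth_fn rho \<and>
     (\<forall>\<xi>. 0 \<le> chi \<xi> \<and> 0 \<le> rho \<xi>) \<and>
     (\<forall>\<xi> \<eta>. norm \<xi> = norm \<eta> \<longrightarrow> chi \<xi> = chi \<eta> \<and> rho \<xi> = rho \<eta>) \<and>
     (\<forall>\<xi>. chi \<xi> \<noteq> 0 \<longrightarrow> norm \<xi> \<le> 4/3) \<and>
     (\<forall>\<xi>. rho \<xi> \<noteq> 0 \<longrightarrow> 3/4 \<le> norm \<xi> \<and> norm \<xi> \<le> 8/3) \<and>
     (\<forall>\<xi>. chi \<xi> + (\<Sum>j. rho ((2 powr (- real j)) *\<^sub>R \<xi>)) = 1)"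

text \<open>Block multiplier rho_{n-1}: n = 0 gives rho_{-1} = chi, n = j+1 gives rho(2^{-j} .).\<close>
definition lp_mult :: "(real \<times> real \<Rightarrow> real) \<Rightarrow> (real \<times> real \<Rightarrow> real) \<Rightarrow> nat \<Rightarrow> real \<times> real \<Rightarrow> real" where
  "lp_mult chi rho n \<xi> = (if n = 0 then chi \<xi> else rho ((2 powr (- real (n - 1))) *\<^sub>R \<xi>))"

text \<open>Littlewood--Paley block Delta_{n-1} f of a distribution with Fourier coefficients fh.\<close>
definition lp_block :: "(real \<times> real \<Rightarrow> real) \<Rightarrow> (real \<times> real \<Rightarrow> real) \<Rightarrow> nat
    \<Rightarrow> (int \<times> int \<Rightarrow> complex) \<Rightarrow> real \<times> real \<Rightarrow> complex" where
  "lp_block chi rho n fh x =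
     (\<Sum>k\<in>{k. lp_mult chi rho n (real_of_int (fst k), real_of_int (snd k)) \<noteq> 0}.
        complex_of_real (lp_mult chi rho n (real_of_int (fst k), real_of_int (snd k))) * fh k
        * cis (2 * pi * (real_of_int (fst k) * fst x + real_of_int (snd k) * snd x)))"

text \<open>Besov norm B^{s}_{infinity,infinity}(T^2) (here s = -kappa):
  sup over j >= -1 of 2^{j s} sup_x |Delta_j f(x)|.\<close>
definition besov_inf_norm :: "(real \<times> real \<Rightarrow> real) \<Rightarrow> (real \<times> real \<Rightarrow> real) \<Rightarrow> real
    \<Rightarrow> (int \<times> int \<Rightarrow> complex) \<Rightarrow> ennreal" where
  "besov_inf_norm chi rho s fh =
     (SUP n. SUP x. ennreal (2 powr ((real n - 1) * s) * cmod (lp_block chi rho n fh x)))"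

definition enn_powr :: "ennreal \<Rightarrow> real \<Rightarrow> ennreal" where
  "enn_powr x p = (if x = \<infinity> then \<infinity> else ennreal (enn2real x powr p))"

end

theory Submission
  imports Defs
begin

text \<open>
  At a fixed point, a Littlewood--Paley block of Q is a centred Gaussian whose variance is at
  most the sum of Ghat(k) over the lattice box |k| <= 2^(j+1). Young's inequality in the lattice
  convolution defining C2hat gives C2hat(k) <= K <k>^(-2t) for every t < 1, and Ghat <= 2 C2hat,
  so this variance grows at most like 4^(j/r) for any r. The supremum of a block over the torus
  is bounded by its maximum over a grid of mesh 8^-(j+1) plus a Lipschitz error, which is at
  most the l1-norm of the coefficients divided by 4^j. Gaussian moments then bound the 2r-th
  moment of 2^(-j kappa) sup |Delta_j Q| by a constant times (256 * 2^(-2 r kappa))^j, which is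
  summable once r kappa >= 5, and finally (sup_j a_j)^p <= 1 + sum_j a_j^(2r) for 1 <= p <= 2r.
\<close>

lemma square_powr: "0 \<le> x \<Longrightarrow> (x\<^sup>2) powr a = x powr (2 * a)" for x :: real
  by (simp add: powr_powr[symmetric])

lemma power_add_le:
  fixes a b :: real
  assumes "0 \<le> a" "0 \<le> b"
  shows "(a + b) ^ q \<le> 2 ^ q * (a ^ q + b ^ q)"
proof -
  have "(a + b) ^ q \<le> (2 * max a b) ^ q"
    using assms by (intro power_mono) auto
  also have "\<dots> \<le> 2 ^ q * (a ^ q + b ^ q)"
    using assms by (simp add: power_mult_distrib max_def)
  finally show ?thesis .
qed

lemma Max_power_le_sum:
  fixes f :: "'a \<Rightarrow> real"
  assumes "finite A" "A \<noteq> {}" "\<And>x. x \<in> A \<Longrightarrow> 0 \<le> f x"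
  shows "(Max (f ` A)) ^ q \<le> (\<Sum>x\<in>A. f x ^ q)"
proof -
  have "Max (f ` A) \<in> f ` A"
    using assms by (intro Max_in) auto
  then obtain y where "y \<in> A" "Max (f ` A) = f y"
    by auto
  then show ?thesis
    using assms by (auto intro: member_le_sum)
qed

lemma sum_power_le:
  fixes f :: "'a \<Rightarrow> real"
  assumes "finite A" "\<And>x. x \<in> A \<Longrightarrow> 0 \<le> f x" "q \<ge> 1"
  shows "(\<Sum>x\<in>A. f x) ^ q \<le> real (card A) ^ q * (\<Sum>x\<in>A. f x ^ q)"
proof (cases "A = {}")
  case True
  then show ?thesis
    using assms(3) by (simp add: power_0_left)
next
  case False
  have "(\<Sum>x\<in>A. f x) ^ q \<le> (real (card A) * Max (f ` A)) ^ q"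
    using assms by (intro power_mono sum_nonneg) (auto intro: sum_bounded_above)
  also have "\<dots> \<le> real (card A) ^ q * (\<Sum>x\<in>A. f x ^ q)"
    using Max_power_le_sum[OF assms(1) False assms(2)] by (simp add: power_mult_distrib mult_left_mono)
  finally show ?thesis .
qed

lemma le_powr_inverse_of_power_le:
  fixes y s :: real
  assumes "0 \<le> y" "y ^ q \<le> s" "q \<ge> 1"
  shows "y \<le> s powr (1 / real q)"
proof -
  have "(y ^ q) powr (1 / real q) = y"
    using assms by (simp add: powr_realpow'[symmetric] powr_powr)
  moreover have "(y ^ q) powr (1 / real q) \<le> s powr (1 / real q)"
    using assms by (intro powr_mono2) auto
  ultimately show ?thesis
    by simp
qed

lemma powr_le_one_plus_powr:
  fixes b p q :: real
  assumes "0 \<le> b" "0 \<le> p" "p \<le> q"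
  shows "b powr p \<le> 1 + b powr q"
proof (cases "b \<le> 1")
  case True
  then have "b powr p \<le> 1 powr p"
    using assms by (intro powr_mono2) auto
  then have "b powr p \<le> 1"
    by simp
  then show ?thesis
    using powr_ge_zero[of b q] by linarith
next
  case False
  then have "b powr p \<le> b powr q"
    using assms by (intro powr_mono) auto
  then show ?thesis
    by simp
qed

lemma Young_split_le:
  fixes a b W t :: real
  assumes "1 \<le> a" "a \<le> b" "0 \<le> W" "W \<le> 4 * b" "0 < t" "t < 1"
  shows "W powr t / (a * b) \<le> 4 * (a powr (-(2/(1+t))) + b powr (-2))"
proof -
  let ?r = "2/(1+t)" and ?q = "2/(1-t)"
  have "W powr t \<le> (4 * b) powr t"
    using assms by (intro powr_mono2) auto
  also have "\<dots> = 4 powr t * b powr t"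
    using assms by (simp add: powr_mult)
  also have "\<dots> \<le> 4 * b powr t"
    using powr_mono[of t 1 4] assms by (intro mult_right_mono) auto
  finally have "W powr t / (a * b) \<le> 4 * ((1/a) * b powr (t - 1))"
    using assms by (simp add: powr_diff divide_right_mono field_simps)
  also have "(1/a) * b powr (t - 1) \<le> (1/a) powr ?r / ?r + (b powr (t - 1)) powr ?q / ?q"
    using assms by (intro Youngs_inequality) (auto simp: field_simps)
  also have "\<dots> \<le> (1/a) powr ?r + (b powr (t - 1)) powr ?q"
    using assms by (intro add_mono) (auto simp: divide_le_eq intro!: mult_left_mono)
  also have "(1/a) powr ?r = a powr (-?r)"
    using assms by (simp add: powr_minus_divide powr_divide)
  also have "(b powr (t - 1)) powr ?q = b powr (-2)"
  proof -
    have "(t - 1) * ?q = -2"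
      using assms by (simp add: field_simps)
    then show ?thesis
      by (simp add: powr_powr)
  qed
  finally show ?thesis
    by simp
qed

section \<open>Lattice sums\<close>

definition bracket_sq :: "int \<times> int \<Rightarrow> real" where
  "bracket_sq k = 1 + zsq k"

lemma zsq_nonneg: "0 \<le> zsq k"
  by (simp add: zsq_def)

lemma bracket_sq_ge_1: "1 \<le> bracket_sq k"
  by (simp add: bracket_sq_def zsq_nonneg)

lemma bracket_sq_pos: "0 < bracket_sq k"
  using bracket_sq_ge_1[of k] by linarith

lemma summable_one_plus_square_powr:
  assumes "u > 1/2"
  shows "summable (\<lambda>n::nat. (1 + (real n)\<^sup>2) powr (-u))"
proof (rule summable_comparison_test_ev)
  show "summable (\<lambda>n::nat. real n powr (-2*u))"
    using assms by (simp add: summable_real_powr_iff)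
  have "(1 + (real n)\<^sup>2) powr (-u) \<le> real n powr (-2*u)" if "n \<ge> 1" for n
  proof -
    have "(1 + (real n)\<^sup>2) powr (-u) \<le> ((real n)\<^sup>2) powr (-u)"
      by (rule powr_mono2') (use assms that in auto)
    also have "((real n)\<^sup>2) powr (-u) = real n powr (-2*u)"
      by (simp add: square_powr)
    finally show ?thesis .
  qed
  then show "\<forall>\<^sub>F n in sequentially. norm ((1 + (real n)\<^sup>2) powr (-u)) \<le> real n powr (-2*u)"
    unfolding eventually_at_top_linorder by (intro exI[of _ 1]) simp
qed

lemma summable_on_int_one_plus_square_powr:
  assumes "u > 1/2"
  shows "(\<lambda>a::int. (1 + (real_of_int a)\<^sup>2) powr (-u)) summable_on UNIV"
proof -
  let ?f = "\<lambda>a::int. (1 + (real_of_int a)\<^sup>2) powr (-u)"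
  have nat: "(\<lambda>n::nat. (1 + (real n)\<^sup>2) powr (-u)) summable_on UNIV"
    using summable_one_plus_square_powr[OF assms]
    by (subst summable_on_UNIV_nonneg_real_iff) auto
  have "?f summable_on range int"
    by (subst summable_on_reindex) (use nat in \<open>auto simp: o_def\<close>)
  moreover have "?f summable_on range (\<lambda>n::nat. - int n)"
    by (subst summable_on_reindex) (use nat in \<open>auto simp: o_def inj_on_def\<close>)
  moreover have "range int \<union> range (\<lambda>n::nat. - int n) = UNIV"
  proof -
    have "x \<in> range int \<union> range (\<lambda>n::nat. - int n)" for x :: int
    proof (cases "x \<ge> 0")
      case True
      then show ?thesis by (metis UnI1 nonneg_int_cases rangeI)
    next
      case False
      then have "x = - int (nat (- x))" by simp
      then show ?thesis by blast
    qed
    then show ?thesis by blast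
  qed
  ultimately show ?thesis
    by (metis summable_on_union)
qed

lemma summable_on_bracket_sq_powr:
  assumes "s > 1"
  shows "(\<lambda>k. bracket_sq k powr (-s)) summable_on UNIV"
proof -
  let ?g = "\<lambda>a::int. (1 + (real_of_int a)\<^sup>2) powr (-(s/2))"
  have g: "?g summable_on UNIV"
    using assms by (intro summable_on_int_one_plus_square_powr) auto
  have "(\<lambda>k::int\<times>int. ?g (fst k) * ?g (snd k)) summable_on Sigma UNIV (\<lambda>_. UNIV)"
    by (rule summable_on_SigmaI[where g = "\<lambda>a. ?g a * infsum ?g UNIV"])
       (use g in \<open>auto intro: has_sum_cmult_right summable_on_cmult_left\<close>)
  then have prod: "(\<lambda>k::int\<times>int. ?g (fst k) * ?g (snd k)) summable_on UNIV"
    by simp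
  show ?thesis
  proof (rule summable_on_comparison_test[OF prod])
    fix k :: "int \<times> int"
    obtain a b where k: "k = (a, b)" by force
    let ?A = "1 + (real_of_int a)\<^sup>2" and ?B = "1 + (real_of_int b)\<^sup>2"
    have pos: "?A > 0" "?B > 0"
      by (simp_all add: add_pos_nonneg)
    have "(1 + x) * (1 + y) \<le> (1 + x + y)\<^sup>2" if "x \<ge> 0" "y \<ge> 0" for x y :: real
    proof -
      have "0 \<le> x * x + y * y + x * y + x + y" using that by simp
      then show ?thesis by (simp add: power2_eq_square algebra_simps)
    qed
    then have "?A * ?B \<le> (bracket_sq k)\<^sup>2"
      by (simp add: k bracket_sq_def zsq_def add.assoc)
    then have "(?A * ?B) powr (s/2) \<le> ((bracket_sq k)\<^sup>2) powr (s/2)"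
      using assms by (intro powr_mono2) auto
    also have "\<dots> = bracket_sq k powr s"
      using bracket_sq_pos[of k] by (simp add: square_powr)
    also have "(?A * ?B) powr (s/2) = ?A powr (s/2) * ?B powr (s/2)"
      using pos by (simp add: powr_mult)
    finally have "inverse (?A powr (s/2) * ?B powr (s/2)) \<ge> inverse (bracket_sq k powr s)"
      using pos by (intro le_imp_inverse_le) auto
    then show "bracket_sq k powr (-s) \<le> ?g (fst k) * ?g (snd k)"
      by (simp add: k powr_minus)
  qed simp
qed

lemma zsub_zsub: "zsub k (zsub k l) = l"
  by (simp add: zsub_def)

lemma
  assumes "s > 1"
  shows summable_on_bracket_sq_zsub_powr: "(\<lambda>l. bracket_sq (zsub k l) powr (-s)) summable_on UNIV"
    and infsum_bracket_sq_zsub_powr: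
      "infsum (\<lambda>l. bracket_sq (zsub k l) powr (-s)) UNIV = infsum (\<lambda>l. bracket_sq l powr (-s)) UNIV"
proof -
  show "(\<lambda>l. bracket_sq (zsub k l) powr (-s)) summable_on UNIV"
    using summable_on_bracket_sq_powr[OF assms]
    by (subst summable_on_reindex_bij_witness[where i = "zsub k" and j = "zsub k" and T = UNIV
          and h = "\<lambda>l. bracket_sq l powr (-s)"]) (auto simp: zsub_zsub)
  show "infsum (\<lambda>l. bracket_sq (zsub k l) powr (-s)) UNIV = infsum (\<lambda>l. bracket_sq l powr (-s)) UNIV"
    by (rule infsum_reindex_bij_witness[where i = "zsub k" and j = "zsub k"]) (auto simp: zsub_zsub)
qed

lemma bracket_sq_le_zsub: "bracket_sq k \<le> 2 * bracket_sq l + 2 * bracket_sq (zsub k l)"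
proof -
  have sq: "x\<^sup>2 \<le> 2 * y\<^sup>2 + 2 * (x - y)\<^sup>2" for x y :: real
    using zero_le_power2[of "x - 2 * y"] by (simp add: power2_eq_square algebra_simps)
  show ?thesis
    using sq[of "real_of_int (fst k)" "real_of_int (fst l)"] sq[of "real_of_int (snd k)" "real_of_int (snd l)"]
    by (simp add: bracket_sq_def zsq_def zsub_def)
qed

lemma convolution_weight_le:
  assumes "0 < t" "t < 1"
  shows "bracket_sq k powr t / (bracket_sq l * bracket_sq (zsub k l)) \<le>
     4 * (bracket_sq l powr (-(2/(1+t))) + bracket_sq (zsub k l) powr (-(2/(1+t)))
          + bracket_sq l powr (-2) + bracket_sq (zsub k l) powr (-2))"
proof (cases "bracket_sq l \<le> bracket_sq (zsub k l)")
  case True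
  then have "bracket_sq k powr t / (bracket_sq l * bracket_sq (zsub k l))
      \<le> 4 * (bracket_sq l powr (-(2/(1+t))) + bracket_sq (zsub k l) powr (-2))"
    using bracket_sq_le_zsub[of k l] assms bracket_sq_ge_1[of l] bracket_sq_ge_1[of k]
    by (intro Young_split_le) auto
  then show ?thesis
    by (smt (verit) powr_ge_zero)
next
  case False
  then have "bracket_sq k powr t / (bracket_sq (zsub k l) * bracket_sq l)
      \<le> 4 * (bracket_sq (zsub k l) powr (-(2/(1+t))) + bracket_sq l powr (-2))"
    using bracket_sq_le_zsub[of k l] assms bracket_sq_ge_1[of "zsub k l"] bracket_sq_ge_1[of k]
    by (intro Young_split_le) auto
  then show ?thesis
    by (smt (verit) powr_ge_zero mult.commute)
qed

lemma summable_on_convolution_majorant: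
  assumes "r > 1"
  shows "(\<lambda>l. bracket_sq l powr (-r) + bracket_sq (zsub k l) powr (-r)
    + bracket_sq l powr (-2) + bracket_sq (zsub k l) powr (-2)) summable_on UNIV"
  using assms by (intro summable_on_add summable_on_bracket_sq_powr summable_on_bracket_sq_zsub_powr) auto

lemma infsum_convolution_majorant:
  assumes "r > 1"
  shows "(\<Sum>\<^sub>\<infinity>l. bracket_sq l powr (-r) + bracket_sq (zsub k l) powr (-r)
      + bracket_sq l powr (-2) + bracket_sq (zsub k l) powr (-2))
    = 2 * (\<Sum>\<^sub>\<infinity>l. bracket_sq l powr (-r)) + 2 * (\<Sum>\<^sub>\<infinity>l. bracket_sq l powr (-2))"
  using assms
  by (subst infsum_add, (intro summable_on_add summable_on_bracket_sq_powr
        summable_on_bracket_sq_zsub_powr; simp)+)+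
     (simp add: infsum_bracket_sq_zsub_powr)

lemma convolution_decay:
  fixes f :: "int \<times> int \<Rightarrow> real"
  assumes "0 < t" "t < 1" and f_nonneg: "\<And>k. 0 \<le> f k" and f_le: "\<And>k. f k \<le> c / bracket_sq k"
  shows "\<exists>K\<ge>0. \<forall>k. infsum (\<lambda>l. f l * f (zsub k l)) UNIV \<le> K * bracket_sq k powr (-t)"
proof -
  define r where "r = 2/(1+t)"
  have r: "r > 1"
    using assms by (simp add: r_def field_simps)
  define K where "K = 4 * c\<^sup>2 *
    (2 * (\<Sum>\<^sub>\<infinity>l. bracket_sq l powr (-r)) + 2 * (\<Sum>\<^sub>\<infinity>l. bracket_sq l powr (-2)))"
  have "infsum (\<lambda>l. f l * f (zsub k l)) UNIV \<le> K * bracket_sq k powr (-t)" for k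
  proof -
    define H where "H l = (4 * c\<^sup>2 * bracket_sq k powr (-t)) * (bracket_sq l powr (-r)
      + bracket_sq (zsub k l) powr (-r) + bracket_sq l powr (-2) + bracket_sq (zsub k l) powr (-2))" for l
    have sum_H: "H summable_on UNIV"
      unfolding H_def by (intro summable_on_cmult_right summable_on_convolution_majorant r)
    have "f l * f (zsub k l) \<le> H l" for l
    proof -
      have "f l * f (zsub k l) \<le> (c / bracket_sq l) * (c / bracket_sq (zsub k l))"
        using f_le f_nonneg by (intro mult_mono) (auto intro: order_trans[OF f_nonneg f_le])
      also have "\<dots> = c\<^sup>2 * bracket_sq k powr (-t)
          * (bracket_sq k powr t / (bracket_sq l * bracket_sq (zsub k l)))"
        using bracket_sq_pos[of k] by (simp add: powr_minus field_simps power2_eq_square)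
      also have "\<dots> \<le> c\<^sup>2 * bracket_sq k powr (-t) * (4 * (bracket_sq l powr (-r)
          + bracket_sq (zsub k l) powr (-r) + bracket_sq l powr (-2) + bracket_sq (zsub k l) powr (-2)))"
        using convolution_weight_le[OF assms(1,2), of k l] unfolding r_def by (intro mult_left_mono) auto
      finally show ?thesis
        by (simp only: H_def mult_ac)
    qed
    then have "infsum (\<lambda>l. f l * f (zsub k l)) UNIV \<le> infsum H UNIV"
      using f_nonneg by (intro infsum_mono summable_on_comparison_test[OF sum_H] sum_H) auto
    also have "infsum H UNIV = K * bracket_sq k powr (-t)"
      unfolding H_def K_def by (simp add: infsum_cmult_right summable_on_convolution_majorant
          infsum_convolution_majorant r)
    finally show ?thesis .
  qed
  moreover have "K \<ge> 0"
    unfolding K_def by (intro mult_nonneg_nonneg add_nonneg_nonneg infsum_nonneg) auto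
  ultimately show ?thesis
    by blast
qed

definition lattice_box :: "nat \<Rightarrow> (int \<times> int) set" where
  "lattice_box n = {-(2^(n+1))..2^(n+1)} \<times> {-(2^(n+1))..2^(n+1)}"

lemma finite_lattice_box: "finite (lattice_box n)"
  by (simp add: lattice_box_def)

lemma card_lattice_box: "real (card (lattice_box n)) \<le> 36 * 4 ^ n"
proof -
  have "card (lattice_box n) = (nat (2 * 2^(n+1) + 1))\<^sup>2"
    by (simp add: lattice_box_def card_cartesian_product power2_eq_square)
  also have "\<dots> = (2 * 2^(n+1) + 1)\<^sup>2"
    by (simp add: nat_power_eq[symmetric] nat_add_distrib nat_mult_distrib)
  finally have "real (card (lattice_box n)) = (2 * 2^(n+1) + 1)\<^sup>2"
    by simp
  also have "\<dots> \<le> (3 * 2^(n+1))\<^sup>2"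
    using one_le_power[of "2::real" "n+1"] by (intro power_mono) auto
  also have "\<dots> = 36 * 4 ^ n"
    by (simp add: power2_eq_square power_mult_distrib[symmetric])
  finally show ?thesis .
qed

lemma in_lattice_box_iff: "k \<in> lattice_box n \<longleftrightarrow> \<bar>fst k\<bar> \<le> 2^(n+1) \<and> \<bar>snd k\<bar> \<le> 2^(n+1)"
  by (cases k) (auto simp: lattice_box_def abs_le_iff)

lemma in_lattice_box_real_iff:
  "k \<in> lattice_box n \<longleftrightarrow> \<bar>real_of_int (fst k)\<bar> \<le> 2^(n+1) \<and> \<bar>real_of_int (snd k)\<bar> \<le> 2^(n+1)"
proof -
  have "\<bar>real_of_int i\<bar> \<le> 2^(n+1) \<longleftrightarrow> \<bar>i\<bar> \<le> 2^(n+1)" for i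
    by (metis of_int_abs of_int_le_iff of_int_numeral of_int_power)
  then show ?thesis
    by (simp add: in_lattice_box_iff)
qed

lemma bracket_sq_le_lattice_box:
  assumes "k \<in> lattice_box n"
  shows "bracket_sq k \<le> 12 * 4 ^ n"
proof -
  have "\<bar>real_of_int (fst k)\<bar> \<le> \<bar>2^(n+1)\<bar>" "\<bar>real_of_int (snd k)\<bar> \<le> \<bar>2^(n+1)\<bar>"
    using assms unfolding in_lattice_box_real_iff by simp_all
  then have "(real_of_int (fst k))\<^sup>2 \<le> (2^(n+1))\<^sup>2" "(real_of_int (snd k))\<^sup>2 \<le> (2^(n+1))\<^sup>2"
    by (simp_all only: abs_le_square_iff)
  moreover have "((2::real)^(n+1))\<^sup>2 = 4 * 4 ^ n"
    by (simp add: power2_eq_square power_mult_distrib[symmetric])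
  moreover have "(1::real) \<le> 4 ^ n"
    by (rule one_le_power) simp
  ultimately show ?thesis
    unfolding bracket_sq_def zsq_def by linarith
qed

lemma sum_lattice_box_le_powr:
  assumes decay: "\<And>k. S k \<le> K * bracket_sq k powr (-t)" and "0 \<le> K" "0 \<le> u" "t + u > 1"
  shows "\<exists>C. \<forall>n. (\<Sum>k\<in>lattice_box n. S k) \<le> C * (4 ^ n) powr u"
proof -
  define Z where "Z = infsum (\<lambda>k. bracket_sq k powr (-(t + u))) UNIV"
  have "(\<Sum>k\<in>lattice_box n. S k) \<le> (K * 12 powr u * Z) * (4 ^ n) powr u" for n
  proof -
    have "(\<Sum>k\<in>lattice_box n. S k)
        \<le> (\<Sum>k\<in>lattice_box n. (K * (12 * 4 ^ n) powr u) * bracket_sq k powr (-(t + u)))"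
    proof (rule sum_mono)
      fix k assume k: "k \<in> lattice_box n"
      have "bracket_sq k powr (-t) = bracket_sq k powr (-(t + u)) * bracket_sq k powr u"
        by (simp add: powr_add[symmetric])
      also have "\<dots> \<le> bracket_sq k powr (-(t + u)) * (12 * 4 ^ n) powr u"
        using bracket_sq_le_lattice_box[OF k] bracket_sq_pos[of k] assms
        by (intro mult_left_mono powr_mono2) auto
      finally have "K * bracket_sq k powr (-t) \<le> (K * (12 * 4 ^ n) powr u) * bracket_sq k powr (-(t + u))"
        using \<open>0 \<le> K\<close> mult_left_mono by (fastforce simp: mult_ac)
      then show "S k \<le> (K * (12 * 4 ^ n) powr u) * bracket_sq k powr (-(t + u))"
        using decay[of k] by linarith
    qed
    also have "\<dots> = (K * (12 * 4 ^ n) powr u) * (\<Sum>k\<in>lattice_box n. bracket_sq k powr (-(t + u)))"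
      by (simp add: sum_distrib_left)
    also have "\<dots> \<le> (K * (12 * 4 ^ n) powr u) * Z"
      unfolding Z_def using assms
      by (intro mult_left_mono finite_sum_le_infsum summable_on_bracket_sq_powr finite_lattice_box) auto
    also have "\<dots> = (K * 12 powr u * Z) * (4 ^ n) powr u"
      by (simp add: powr_mult)
    finally show ?thesis .
  qed
  then show ?thesis
    by blast
qed

lemma bounded_of_bracket_decay:
  fixes S :: "int \<times> int \<Rightarrow> real"
  assumes "\<And>k. S k \<le> K * bracket_sq k powr (-t)" "0 \<le> t"
  shows "\<exists>V\<ge>0. \<forall>k. S k \<le> V"
proof (intro exI conjI allI)
  fix k
  have "bracket_sq k powr (-t) \<le> 1 powr (-t)"
    using bracket_sq_ge_1[of k] assms(2) by (intro powr_mono2') auto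
  then have "\<bar>K\<bar> * bracket_sq k powr (-t) \<le> \<bar>K\<bar>"
    by (intro mult_right_le_one_le) auto
  moreover have "K * bracket_sq k powr (-t) \<le> \<bar>K\<bar> * bracket_sq k powr (-t)"
    by (intro mult_right_mono) auto
  ultimately show "S k \<le> \<bar>K\<bar>"
    using assms(1)[of k] by linarith
qed simp

lemma sum_lattice_box_power_le:
  fixes S :: "int \<times> int \<Rightarrow> real"
  assumes S_nonneg: "\<And>k. 0 \<le> S k"
    and decay: "\<And>t. 0 < t \<Longrightarrow> t < 1 \<Longrightarrow> \<exists>K. \<forall>k. S k \<le> K * bracket_sq k powr (-t)"
    and "r \<ge> 1"
  shows "\<exists>C\<ge>0. \<forall>n. (\<Sum>k\<in>lattice_box n. S k) ^ r \<le> C * 4 ^ n"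
proof -
  \<comment> \<open>chosen so that \<open>t + 1/r > 1\<close>, which makes \<open>bracket_sq k powr (-(t + 1/r))\<close> summable\<close>
  define t where "t = 1 - 1 / (2 * real r)"
  have t: "0 < t" "t < 1" "t + 1 / real r > 1"
    using assms(3) by (auto simp: t_def field_simps)
  obtain K where K: "\<And>k. S k \<le> K * bracket_sq k powr (-t)"
    using decay[OF t(1,2)] by auto
  have "S k \<le> max K 0 * bracket_sq k powr (-t)" for k
    using K[of k] mult_right_mono[of K "max K 0" "bracket_sq k powr (-t)"] by simp
  then obtain C where C: "\<And>n. (\<Sum>k\<in>lattice_box n. S k) \<le> C * (4 ^ n) powr (1 / real r)"
    using sum_lattice_box_le_powr[of S "max K 0" t "1 / real r"] t by auto
  have "(\<Sum>k\<in>lattice_box n. S k) ^ r \<le> C ^ r * 4 ^ n" for n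
  proof -
    have "(\<Sum>k\<in>lattice_box n. S k) ^ r \<le> (C * (4 ^ n) powr (1 / real r)) ^ r"
      using C[of n] S_nonneg by (intro power_mono sum_nonneg) auto
    also have "\<dots> = C ^ r * 4 ^ n"
      using assms(3) by (simp add: power_mult_distrib powr_power)
    finally show ?thesis .
  qed
  moreover have "0 \<le> C ^ r"
  proof -
    have "0 \<le> (\<Sum>k\<in>lattice_box 0. S k) ^ r"
      using S_nonneg by (simp add: sum_nonneg)
    then show ?thesis
      using calculation[of 0] by simp
  qed
  ultimately show ?thesis
    by blast
qed

section \<open>Fourier coefficients of C, C^2 and G\<close>

lemma Chat_pos: "m > 0 \<Longrightarrow> 0 < Chat m k"
  unfolding Chat_def using zsq_nonneg[of k] by (simp add: add_pos_nonneg)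

lemma Chat_le:
  assumes "m > 0"
  shows "Chat m k \<le> (1 / min m 1) / bracket_sq k"
proof -
  have "min m 1 * (1 + zsq k) \<le> m + 4 * pi\<^sup>2 * zsq k"
  proof -
    have "1 \<le> 4 * pi\<^sup>2"
      using one_le_power[of pi 2] pi_gt3 by linarith
    then have "min m 1 * zsq k \<le> 4 * pi\<^sup>2 * zsq k"
      using zsq_nonneg[of k] by (intro mult_right_mono) auto
    then show ?thesis
      by (simp add: algebra_simps)
  qed
  then show ?thesis
    unfolding Chat_def bracket_sq_def using assms zsq_nonneg[of k]
    by (simp add: divide_simps add_pos_nonneg)
qed

lemma C2hat_nonneg: "m > 0 \<Longrightarrow> 0 \<le> C2hat m k"
  unfolding C2hat_def by (intro infsum_nonneg) (simp add: less_imp_le Chat_pos)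

lemma C2hat_decay:
  assumes "m > 0" "0 < t" "t < 1"
  shows "\<exists>K\<ge>0. \<forall>k. C2hat m k \<le> K * bracket_sq k powr (-t)"
  unfolding C2hat_def
  by (rule convolution_decay[OF assms(2,3) less_imp_le[OF Chat_pos[OF assms(1)]] Chat_le[OF assms(1)]])

lemma Ghat_nonneg: "m > 0 \<Longrightarrow> 0 \<le> Ghat m k"
  unfolding Ghat_def using C2hat_nonneg by simp

lemma Ghat_le_C2hat: "m > 0 \<Longrightarrow> Ghat m k \<le> 2 * C2hat m k"
  unfolding Ghat_def using C2hat_nonneg[of m k]
  by (simp add: divide_le_eq mult_le_cancel_left1)

lemma Ghat_decay:
  assumes "m > 0" "0 < t" "t < 1"
  shows "\<exists>K. \<forall>k. Ghat m k \<le> K * bracket_sq k powr (-t)"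
proof -
  obtain K where K: "\<And>k. C2hat m k \<le> K * bracket_sq k powr (-t)"
    using C2hat_decay[OF assms] by blast
  have "Ghat m k \<le> 2 * (K * bracket_sq k powr (-t))" for k
    using Ghat_le_C2hat[OF assms(1), of k] K[of k] by linarith
  then show ?thesis
    by (intro exI[of _ "2 * K"]) (simp add: mult.assoc)
qed

section \<open>Dyadic partitions of unity and Littlewood--Paley blocks\<close>

definition lattice_vec :: "int \<times> int \<Rightarrow> real \<times> real" where
  "lattice_vec k = (real_of_int (fst k), real_of_int (snd k))"

lemma lattice_vec_zneg: "lattice_vec (zneg k) = - lattice_vec k"
  by (simp add: lattice_vec_def zneg_def)

lemma zneg_zneg [simp]: "zneg (zneg k) = k"
  by (simp add: zneg_def)

definition phase :: "int \<times> int \<Rightarrow> real \<times> real \<Rightarrow> real" where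
  "phase k x = 2 * pi * (real_of_int (fst k) * fst x + real_of_int (snd k) * snd x)"

lemma phase_zneg: "phase (zneg k) x = - phase k x"
  by (simp add: phase_def zneg_def algebra_simps)

lemma phase_frac: "cis (phase k (frac (fst x), frac (snd x))) = cis (phase k x)"
proof -
  have "phase k (frac (fst x), frac (snd x))
      = phase k x + 2 * pi * real_of_int (- (fst k * \<lfloor>fst x\<rfloor> + snd k * \<lfloor>snd x\<rfloor>))"
    by (simp add: phase_def frac_def algebra_simps)
  then show ?thesis
    by (simp only: cis_mult[symmetric] cis_multiple_2pi Ints_of_int mult_1_right)
qed

lemma norm_cis_diff_le: "cmod (cis a - cis b) \<le> \<bar>a - b\<bar>"
proof -
  have "(cmod (cis a - cis b))\<^sup>2 = (cos a - cos b)\<^sup>2 + (sin a - sin b)\<^sup>2"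
    by (simp add: cmod_power2)
  also have "\<dots> = 2 - 2 * cos (a - b)"
    by (simp add: cos_diff power2_eq_square algebra_simps)
  also have "\<dots> = 4 * (sin ((a - b) / 2))\<^sup>2"
  proof -
    have "2 * ((a - b) / 2) = a - b"
      by simp
    then show ?thesis
      using cos_double_sin[of "(a - b) / 2"] by (simp only:) simp
  qed
  also have "\<dots> \<le> 4 * ((a - b) / 2)\<^sup>2"
    using abs_sin_x_le_abs_x[of "(a - b) / 2"] by (simp only: abs_le_square_iff)
  also have "\<dots> = (a - b)\<^sup>2"
    by (simp add: power2_eq_square field_simps)
  finally show ?thesis
    by (metis abs_le_square_iff abs_norm_cancel)
qed

definition unit_grid :: "nat \<Rightarrow> (real \<times> real) set" where
  "unit_grid P = (\<lambda>(i, j). (real i / real P, real j / real P)) ` ({..<P} \<times> {..<P})"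

lemma finite_unit_grid: "finite (unit_grid P)"
  by (simp add: unit_grid_def)

lemma card_unit_grid: "card (unit_grid P) \<le> P * P"
  unfolding unit_grid_def using card_image_le[of "{..<P} \<times> {..<P}"]
  by (simp add: card_cartesian_product)

lemma unit_grid_nonempty: "P > 0 \<Longrightarrow> unit_grid P \<noteq> {}"
  by (auto simp: unit_grid_def)

lemma grid_point_near:
  assumes "P > 0" "0 \<le> y" "y < 1"
  shows "\<exists>i<P. \<bar>y - real i / real P\<bar> \<le> 1 / real P"
proof (intro exI conjI)
  define i where "i = nat \<lfloor>real P * y\<rfloor>"
  have "real i = real_of_int \<lfloor>real P * y\<rfloor>"
    using assms unfolding i_def by simp
  then have i: "real i \<le> real P * y" "real P * y < real i + 1"
    by linarith+
  moreover have "real P * y < real P"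
    using assms by simp
  ultimately show "i < P"
    by linarith
  have "\<bar>real P * y - real i\<bar> \<le> 1"
    using i by linarith
  moreover have "y - real i / real P = (real P * y - real i) / real P"
    using assms by (simp add: field_simps)
  ultimately show "\<bar>y - real i / real P\<bar> \<le> 1 / real P"
    using assms by (simp add: abs_div divide_right_mono)
qed

locale dyadic_partition =
  fixes chi rho :: "real \<times> real \<Rightarrow> real"
  assumes pou: "dyadic_pou chi rho"
begin

lemma chi_nonneg: "0 \<le> chi \<xi>" and rho_nonneg: "0 \<le> rho \<xi>"
  using pou unfolding dyadic_pou_def by blast+

lemma chi_radial: "norm \<xi> = norm \<eta> \<Longrightarrow> chi \<xi> = chi \<eta>"
  and rho_radial: "norm \<xi> = norm \<eta> \<Longrightarrow> rho \<xi> = rho \<eta>"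
  using pou unfolding dyadic_pou_def by blast+

lemma chi_support: "chi \<xi> \<noteq> 0 \<Longrightarrow> norm \<xi> \<le> 4/3"
  and rho_support: "rho \<xi> \<noteq> 0 \<Longrightarrow> 3/4 \<le> norm \<xi> \<and> norm \<xi> \<le> 8/3"
  using pou unfolding dyadic_pou_def by blast+

lemma chi_plus_suminf_rho: "chi \<xi> + (\<Sum>j. rho ((2 powr (- real j)) *\<^sub>R \<xi>)) = 1"
  using pou unfolding dyadic_pou_def by blast

lemma finite_rho_dilates_support: "finite {j. rho ((2 powr (- real j)) *\<^sub>R \<xi>) \<noteq> 0}"
proof (rule finite_subset)
  show "{j. rho ((2 powr (- real j)) *\<^sub>R \<xi>) \<noteq> 0} \<subseteq> {..nat \<lceil>2 * norm \<xi>\<rceil>}"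
  proof
    fix j assume "j \<in> {j. rho ((2 powr (- real j)) *\<^sub>R \<xi>) \<noteq> 0}"
    then have "3/4 \<le> 2 powr (- real j) * norm \<xi>"
      using rho_support by fastforce
    then have "3/4 * 2^j \<le> norm \<xi>"
      by (simp add: powr_minus powr_realpow field_simps)
    moreover have "real j < 2^j"
      using of_nat_less_iff[THEN iffD2, OF less_exp[of j]] by simp
    ultimately have "real j \<le> 2 * norm \<xi>"
      by linarith
    then show "j \<in> {..nat \<lceil>2 * norm \<xi>\<rceil>}"
      by (simp add: nat_le_iff) linarith
  qed
qed simp

lemma summable_rho_dilates: "summable (\<lambda>j. rho ((2 powr (- real j)) *\<^sub>R \<xi>))"
  by (rule summable_finite[OF finite_rho_dilates_support]) auto

lemma rho_le_1: "rho \<xi> \<le> 1" and chi_le_1: "chi \<xi> \<le> 1"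
proof -
  have "rho \<xi> \<le> (\<Sum>j. rho ((2 powr (- real j)) *\<^sub>R \<xi>))"
    using sum_le_suminf[OF summable_rho_dilates, of "{0}" \<xi>] by (simp add: rho_nonneg)
  then show "rho \<xi> \<le> 1"
    using chi_plus_suminf_rho[of \<xi>] chi_nonneg[of \<xi>] by linarith
  have "0 \<le> (\<Sum>j. rho ((2 powr (- real j)) *\<^sub>R \<xi>))"
    by (rule suminf_nonneg[OF summable_rho_dilates]) (simp add: rho_nonneg)
  then show "chi \<xi> \<le> 1"
    using chi_plus_suminf_rho[of \<xi>] by linarith
qed

lemma lp_mult_nonneg: "0 \<le> lp_mult chi rho n \<xi>"
  by (simp add: lp_mult_def chi_nonneg rho_nonneg)

lemma lp_mult_le_1: "lp_mult chi rho n \<xi> \<le> 1"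
  by (simp add: lp_mult_def chi_le_1 rho_le_1)

lemma lp_mult_uminus: "lp_mult chi rho n (- \<xi>) = lp_mult chi rho n \<xi>"
  unfolding lp_mult_def using chi_radial[of "- \<xi>" \<xi>] rho_radial[of "c *\<^sub>R (- \<xi>)" "c *\<^sub>R \<xi>" for c]
  by simp

lemma lp_mult_support:
  assumes "lp_mult chi rho n \<xi> \<noteq> 0"
  shows "norm \<xi> \<le> 2 ^ (n+1)"
proof (cases n)
  case 0
  then show ?thesis
    using assms chi_support unfolding lp_mult_def by fastforce
next
  case (Suc j)
  then have "2 powr (- real j) * norm \<xi> \<le> 8/3"
    using assms rho_support[of "(2 powr (- real j)) *\<^sub>R \<xi>"] unfolding lp_mult_def by simp
  then have "norm \<xi> \<le> 8/3 * 2^j"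
    by (simp add: powr_minus powr_realpow field_simps)
  also have "\<dots> \<le> 2 ^ (n+1)"
    using Suc by simp
  finally show ?thesis .
qed

definition block_support :: "nat \<Rightarrow> (int \<times> int) set" where
  "block_support n = {k. lp_mult chi rho n (lattice_vec k) \<noteq> 0}"

lemma block_support_subset_lattice_box: "block_support n \<subseteq> lattice_box n"
proof
  fix k assume "k \<in> block_support n"
  then have "norm (lattice_vec k) \<le> 2^(n+1)"
    using lp_mult_support unfolding block_support_def by blast
  then show "k \<in> lattice_box n"
    unfolding in_lattice_box_real_iff lattice_vec_def
    using norm_fst_le[of "real_of_int (fst k)" "real_of_int (snd k)"]
      norm_snd_le[of "real_of_int (snd k)" "real_of_int (fst k)"]
    by simp
qed

lemma finite_block_support: "finite (block_support n)"
  using block_support_subset_lattice_box finite_lattice_box by (rule finite_subset)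

lemma card_block_support: "real (card (block_support n)) \<le> 36 * 4 ^ n"
  using card_mono[OF finite_lattice_box block_support_subset_lattice_box, of n] card_lattice_box[of n]
  by linarith

lemma zneg_in_block_support_iff: "zneg k \<in> block_support n \<longleftrightarrow> k \<in> block_support n"
  by (simp add: block_support_def lattice_vec_zneg lp_mult_uminus)

definition block_coef :: "nat \<Rightarrow> real \<times> real \<Rightarrow> int \<times> int \<Rightarrow> complex" where
  "block_coef n x k = complex_of_real (lp_mult chi rho n (lattice_vec k)) * cis (phase k x)"

lemma block_coef_support: "{k. block_coef n x k \<noteq> 0} = block_support n"
  by (auto simp: block_coef_def block_support_def)

lemma block_coef_zneg: "block_coef n x (zneg k) = cnj (block_coef n x k)"
  by (simp add: block_coef_def lattice_vec_zneg lp_mult_uminus phase_zneg cis_cnj)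

lemma lp_block_eq_sum: "lp_block chi rho n fh x = (\<Sum>k\<in>block_support n. block_coef n x k * fh k)"
  unfolding lp_block_def block_support_def block_coef_def lattice_vec_def phase_def
  by (intro sum.cong) (auto simp: mult_ac)

lemma lp_block_frac: "lp_block chi rho n fh (frac (fst x), frac (snd x)) = lp_block chi rho n fh x"
  unfolding lp_block_eq_sum block_coef_def by (simp add: phase_frac)

lemma norm_block_coef_diff_le:
  assumes "k \<in> block_support n"
  shows "cmod (block_coef n x k - block_coef n y k) \<le> 2 * pi * (\<bar>fst x - fst y\<bar> + \<bar>snd x - snd y\<bar>) * 2^(n+1)"
proof -
  have k: "\<bar>real_of_int (fst k)\<bar> \<le> 2^(n+1)" "\<bar>real_of_int (snd k)\<bar> \<le> 2^(n+1)"
    using assms block_support_subset_lattice_box in_lattice_box_real_iff by blast+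
  have "cmod (block_coef n x k - block_coef n y k)
      = lp_mult chi rho n (lattice_vec k) * cmod (cis (phase k x) - cis (phase k y))"
    by (simp add: block_coef_def lp_mult_nonneg norm_mult flip: right_diff_distrib)
  also have "\<dots> \<le> cmod (cis (phase k x) - cis (phase k y))"
    by (rule mult_left_le_one_le[OF norm_ge_zero lp_mult_nonneg lp_mult_le_1])
  also have "\<dots> \<le> \<bar>phase k x - phase k y\<bar>"
    by (rule norm_cis_diff_le)
  also have "\<dots> = \<bar>2 * pi * (real_of_int (fst k) * (fst x - fst y) + real_of_int (snd k) * (snd x - snd y))\<bar>"
    by (simp add: phase_def algebra_simps)
  also have "\<dots> = 2 * pi * \<bar>real_of_int (fst k) * (fst x - fst y) + real_of_int (snd k) * (snd x - snd y)\<bar>"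
    by (simp add: abs_mult)
  also have "\<dots> \<le> 2 * pi * (\<bar>real_of_int (fst k)\<bar> * \<bar>fst x - fst y\<bar> + \<bar>real_of_int (snd k)\<bar> * \<bar>snd x - snd y\<bar>)"
    by (simp add: abs_mult[symmetric] abs_triangle_ineq)
  also have "\<dots> \<le> 2 * pi * (2^(n+1) * \<bar>fst x - fst y\<bar> + 2^(n+1) * \<bar>snd x - snd y\<bar>)"
    using k by (intro mult_left_mono add_mono mult_right_mono) auto
  finally show ?thesis
    by (simp add: algebra_simps)
qed

lemma lp_block_lipschitz:
  "cmod (lp_block chi rho n fh x - lp_block chi rho n fh y)
     \<le> 2 * pi * (\<bar>fst x - fst y\<bar> + \<bar>snd x - snd y\<bar>) * 2^(n+1) * (\<Sum>k\<in>block_support n. cmod (fh k))"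
proof -
  have "lp_block chi rho n fh x - lp_block chi rho n fh y
      = (\<Sum>k\<in>block_support n. (block_coef n x k - block_coef n y k) * fh k)"
    unfolding lp_block_eq_sum sum_subtractf[symmetric] by (simp add: algebra_simps)
  then have "cmod (lp_block chi rho n fh x - lp_block chi rho n fh y)
      \<le> (\<Sum>k\<in>block_support n. cmod (block_coef n x k - block_coef n y k) * cmod (fh k))"
    by (metis (no_types, lifting) norm_mult norm_sum sum.cong)
  also have "\<dots> \<le> (\<Sum>k\<in>block_support n. 2 * pi * (\<bar>fst x - fst y\<bar> + \<bar>snd x - snd y\<bar>) * 2^(n+1) * cmod (fh k))"
    by (intro sum_mono mult_right_mono norm_block_coef_diff_le) auto
  finally show ?thesis
    by (simp add: sum_distrib_left)
qed

lemma norm_lp_block_le_grid: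
  assumes "P > 0"
  shows "cmod (lp_block chi rho n fh x) \<le> Max ((\<lambda>g. cmod (lp_block chi rho n fh g)) ` unit_grid P)
           + 4 * pi * 2^(n+1) / real P * (\<Sum>k\<in>block_support n. cmod (fh k))"
proof -
  let ?x = "(frac (fst x), frac (snd x))" and ?Y = "\<Sum>k\<in>block_support n. cmod (fh k)"
  obtain i where i: "i < P" "\<bar>frac (fst x) - real i / real P\<bar> \<le> 1 / real P"
    using grid_point_near[OF assms, of "frac (fst x)"] frac_lt_1 by auto
  obtain j where j: "j < P" "\<bar>frac (snd x) - real j / real P\<bar> \<le> 1 / real P"
    using grid_point_near[OF assms, of "frac (snd x)"] frac_lt_1 by auto
  define g where "g = (real i / real P, real j / real P)"
  have "g \<in> unit_grid P"
    unfolding g_def unit_grid_def using i j by auto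
  have "cmod (lp_block chi rho n fh x)
      \<le> cmod (lp_block chi rho n fh g) + cmod (lp_block chi rho n fh ?x - lp_block chi rho n fh g)"
    unfolding lp_block_frac[symmetric, of n fh x] by (rule norm_triangle_sub)
  also have "cmod (lp_block chi rho n fh g) \<le> Max ((\<lambda>g. cmod (lp_block chi rho n fh g)) ` unit_grid P)"
    using \<open>g \<in> unit_grid P\<close> finite_unit_grid by (intro Max_ge) auto
  also have "cmod (lp_block chi rho n fh ?x - lp_block chi rho n fh g)
      \<le> 2 * pi * (\<bar>fst ?x - fst g\<bar> + \<bar>snd ?x - snd g\<bar>) * 2^(n+1) * ?Y"
    by (rule lp_block_lipschitz)
  also have "\<dots> \<le> 2 * pi * (1 / real P + 1 / real P) * 2^(n+1) * ?Y"
    using i j unfolding g_def by (intro mult_right_mono mult_left_mono add_mono sum_nonneg) auto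
  finally show ?thesis
    by (simp add: field_simps)
qed

end

section \<open>Gaussian Fourier fields\<close>

lemma Im_sum_hermitian:
  assumes "finite A" "\<And>k. k \<in> A \<Longrightarrow> zneg k \<in> A" "\<And>k. k \<in> A \<Longrightarrow> f (zneg k) = cnj (f k)"
  shows "Im (sum f A) = 0"
proof -
  have "cnj (sum f A) = sum (\<lambda>k. f (zneg k)) A"
    using assms(3) by simp
  also have "\<dots> = sum f A"
    by (rule sum.reindex_bij_witness[where i = zneg and j = zneg]) (auto simp: assms(2))
  finally show ?thesis
    by (metis cnj.sel(2) neg_equal_zero)
qed

lemma nn_integral_sum_le_card:
  fixes f :: "'i \<Rightarrow> 'a \<Rightarrow> real"
  assumes "finite I" "\<And>i. i \<in> I \<Longrightarrow> f i \<in> borel_measurable M" "\<And>i x. i \<in> I \<Longrightarrow> 0 \<le> f i x"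
    and "\<And>i. i \<in> I \<Longrightarrow> (\<integral>\<^sup>+x. ennreal (f i x) \<partial>M) \<le> ennreal c" "0 \<le> c"
  shows "(\<integral>\<^sup>+x. ennreal (\<Sum>i\<in>I. f i x) \<partial>M) \<le> ennreal (real (card I) * c)"
proof -
  have "(\<integral>\<^sup>+x. ennreal (\<Sum>i\<in>I. f i x) \<partial>M) = (\<integral>\<^sup>+x. (\<Sum>i\<in>I. ennreal (f i x)) \<partial>M)"
    using assms(3) by (intro nn_integral_cong) simp
  also have "\<dots> = (\<Sum>i\<in>I. \<integral>\<^sup>+x. ennreal (f i x) \<partial>M)"
    using assms(2) by (intro nn_integral_sum) auto
  also have "\<dots> \<le> (\<Sum>i\<in>I. ennreal c)"
    using assms(4) by (intro sum_mono)
  also have "\<dots> = ennreal (real (card I) * c)"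
    using assms(5) by (simp add: ennreal_mult ennreal_of_nat_eq_real_of_nat)
  finally show ?thesis .
qed

definition gaussian_moment :: "nat \<Rightarrow> real" where
  "gaussian_moment r = fact (2 * r) / (2 ^ r * fact r)"

definition re_coef :: "int \<times> int \<Rightarrow> int \<times> int \<Rightarrow> complex" where
  "re_coef k j = (if j = k then 1/2 else 0) + (if j = zneg k then 1/2 else 0)"

definition im_coef :: "int \<times> int \<Rightarrow> int \<times> int \<Rightarrow> complex" where
  "im_coef k j = (if j = k then - \<i>/2 else 0) + (if j = zneg k then \<i>/2 else 0)"

lemma zneg_eq_iff: "zneg j = k \<longleftrightarrow> j = zneg k"
  by (auto simp: zneg_def)

lemma re_coef_support: "{j. re_coef k j \<noteq> 0} \<subseteq> {k, zneg k}"
  and im_coef_support: "{j. im_coef k j \<noteq> 0} \<subseteq> {k, zneg k}"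
  by (auto simp: re_coef_def im_coef_def)

lemma finite_re_coef_support: "finite {j. re_coef k j \<noteq> 0}"
  and finite_im_coef_support: "finite {j. im_coef k j \<noteq> 0}"
  by (auto intro: finite_subset[OF re_coef_support] finite_subset[OF im_coef_support])

lemma re_coef_zneg: "re_coef k (zneg j) = cnj (re_coef k j)"
  and im_coef_zneg: "im_coef k (zneg j) = cnj (im_coef k j)"
  by (auto simp: re_coef_def im_coef_def zneg_eq_iff)

lemma re_coef_nonzero: "\<exists>j. re_coef k j \<noteq> 0"
proof
  show "re_coef k k \<noteq> 0"
    by (simp add: re_coef_def)
qed

locale gaussian_fourier_field = prob_space M for M :: "'w measure" +
  fixes Qh :: "'w \<Rightarrow> int \<times> int \<Rightarrow> complex" and S :: "int \<times> int \<Rightarrow> real"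
  assumes real_field: "\<And>\<omega> k. \<omega> \<in> space M \<Longrightarrow> Qh \<omega> (zneg k) = cnj (Qh \<omega> k)"
    and gaussian: "\<And>a :: int \<times> int \<Rightarrow> complex.
        finite {k. a k \<noteq> 0} \<Longrightarrow> (\<forall>k. a (zneg k) = cnj (a k)) \<Longrightarrow> (\<exists>k. a k \<noteq> 0) \<Longrightarrow>
        distributed M lborel (\<lambda>\<omega>. Re (\<Sum>k\<in>{k. a k \<noteq> 0}. a k * Qh \<omega> k))
          (\<lambda>x. ennreal (normal_density 0 (sqrt (\<Sum>k\<in>{k. a k \<noteq> 0}. (cmod (a k))\<^sup>2 * S k)) x))"
    and S_nonneg: "\<And>k. 0 \<le> S k"
begin

definition lin_obs :: "(int \<times> int \<Rightarrow> complex) \<Rightarrow> 'w \<Rightarrow> real" where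
  "lin_obs a \<omega> = Re (\<Sum>k\<in>{k. a k \<noteq> 0}. a k * Qh \<omega> k)"

definition lin_var :: "(int \<times> int \<Rightarrow> complex) \<Rightarrow> real" where
  "lin_var a = (\<Sum>k\<in>{k. a k \<noteq> 0}. (cmod (a k))\<^sup>2 * S k)"

lemma lin_var_nonneg: "0 \<le> lin_var a"
  unfolding lin_var_def by (intro sum_nonneg mult_nonneg_nonneg S_nonneg) auto

lemma distributed_lin_obs:
  assumes "finite {k. a k \<noteq> 0}" "\<And>k. a (zneg k) = cnj (a k)" "\<exists>k. a k \<noteq> 0"
  shows "distributed M lborel (lin_obs a) (\<lambda>x. ennreal (normal_density 0 (sqrt (lin_var a)) x))"
  using gaussian[of a] assms unfolding lin_obs_def[abs_def] lin_var_def by blast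

lemma sum_two_point:
  fixes a z :: "int \<times> int \<Rightarrow> complex"
  assumes "{j. a j \<noteq> 0} \<subseteq> {k, zneg k}"
  shows "(\<Sum>j\<in>{j. a j \<noteq> 0}. a j * z j) = (\<Sum>j\<in>{k, zneg k}. a j * z j)"
  by (rule sum.mono_neutral_left) (use assms in auto)

lemma lin_obs_re_coef: "\<omega> \<in> space M \<Longrightarrow> lin_obs (re_coef k) \<omega> = Re (Qh \<omega> k)"
  unfolding lin_obs_def sum_two_point[OF re_coef_support]
  by (cases "zneg k = k") (auto simp: re_coef_def real_field[of \<omega> k] zneg_eq_iff)

lemma lin_obs_im_coef: "\<omega> \<in> space M \<Longrightarrow> lin_obs (im_coef k) \<omega> = Im (Qh \<omega> k)"
proof -
  assume \<omega>: "\<omega> \<in> space M"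
  show ?thesis
  proof (cases "zneg k = k")
    case True
    then have "Im (Qh \<omega> k) = 0"
      using real_field[OF \<omega>, of k] by (metis cnj.sel(2) neg_equal_zero)
    then show ?thesis
      using True unfolding lin_obs_def sum_two_point[OF im_coef_support] by (simp add: im_coef_def)
  next
    case False
    then show ?thesis
      unfolding lin_obs_def sum_two_point[OF im_coef_support]
      by (auto simp: im_coef_def real_field[OF \<omega>, of k] zneg_eq_iff)
  qed
qed

lemma borel_measurable_Qh [measurable]: "(\<lambda>\<omega>. Qh \<omega> k) \<in> borel_measurable M"
proof -
  have "lin_obs (re_coef k) \<in> borel_measurable M"
    using distributed_measurable[OF distributed_lin_obs[OF finite_re_coef_support re_coef_zneg re_coef_nonzero]]
    by simp
  then have re: "(\<lambda>\<omega>. Re (Qh \<omega> k)) \<in> borel_measurable M"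
    by (rule measurable_cong[THEN iffD1, rotated]) (simp add: lin_obs_re_coef)
  have "lin_obs (im_coef k) \<in> borel_measurable M"
  proof (cases "\<exists>j. im_coef k j \<noteq> 0")
    case True
    then show ?thesis
      using distributed_measurable[OF distributed_lin_obs[OF finite_im_coef_support im_coef_zneg True]]
      by simp
  next
    case False
    then have "im_coef k = (\<lambda>_. 0)"
      by auto
    then show ?thesis
      by (simp add: lin_obs_def[abs_def])
  qed
  then have im: "(\<lambda>\<omega>. Im (Qh \<omega> k)) \<in> borel_measurable M"
    by (rule measurable_cong[THEN iffD1, rotated]) (simp add: lin_obs_im_coef)
  show ?thesis
    using re im by (simp add: borel_measurable_complex_iff)
qed

lemma borel_measurable_lin_obs [measurable]: "lin_obs a \<in> borel_measurable M"
  unfolding lin_obs_def by measurable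

lemma nn_integral_lin_obs_power:
  assumes "finite {k. a k \<noteq> 0}" "\<And>k. a (zneg k) = cnj (a k)"
  shows "(\<integral>\<^sup>+\<omega>. ennreal (lin_obs a \<omega> ^ (2 * r)) \<partial>M) \<le> ennreal (gaussian_moment r * lin_var a ^ r)"
proof (cases "\<exists>k. a k \<noteq> 0")
  case False
  then have "a = (\<lambda>_. 0)"
    by auto
  then have "lin_obs a = (\<lambda>_. 0)" "lin_var a = 0"
    by (simp_all add: lin_obs_def[abs_def] lin_var_def)
  then show ?thesis
    by (cases r) (simp_all add: gaussian_moment_def emeasure_space_1)
next
  case True
  note distr = distributed_lin_obs[OF assms True]
  have "(\<integral>\<^sup>+\<omega>. ennreal (lin_obs a \<omega> ^ (2 * r)) \<partial>M)
      = (\<integral>\<^sup>+x. ennreal (normal_density 0 (sqrt (lin_var a)) x) * ennreal (x ^ (2 * r)) \<partial>lborel)"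
    by (rule distributed_nn_integral[OF distr, symmetric]) simp
  also have "\<dots> \<le> ennreal (gaussian_moment r * lin_var a ^ r)"
  proof (cases "lin_var a = 0")
    case True
    \<comment> \<open>\<open>normal_density 0 0\<close> is the junk value 0, so the integral vanishes\<close>
    then show ?thesis
      by (simp add: normal_density_def)
  next
    case False
    then have \<sigma>: "sqrt (lin_var a) > 0"
      using lin_var_nonneg[of a] by simp
    note moment = normal_moment_even[where \<sigma> = "sqrt (lin_var a)" and \<mu> = 0 and k = r, OF \<sigma>]
    have "(\<integral>\<^sup>+x. ennreal (normal_density 0 (sqrt (lin_var a)) x) * ennreal (x ^ (2 * r)) \<partial>lborel)
        = (\<integral>\<^sup>+x. ennreal (normal_density 0 (sqrt (lin_var a)) x * (x - 0) ^ (2 * r)) \<partial>lborel)"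
      by (intro nn_integral_cong) (simp add: ennreal_mult[symmetric] zero_le_even_power)
    also have "\<dots> = ennreal (fact (2 * r) / ((2 / (sqrt (lin_var a))\<^sup>2) ^ r * fact r))"
      by (rule nn_integral_eq_integral[OF integrable.intros[OF moment],
            unfolded has_bochner_integral_integral_eq[OF moment]])
         (simp add: zero_le_even_power)
    also have "fact (2 * r) / ((2 / (sqrt (lin_var a))\<^sup>2) ^ r * fact r) = gaussian_moment r * lin_var a ^ r"
      using lin_var_nonneg[of a] by (simp add: gaussian_moment_def field_simps)
    finally show ?thesis
      by simp
  qed
  finally show ?thesis .
qed

lemma nn_integral_lin_obs_power_le:
  assumes "finite {k. a k \<noteq> 0}" "\<And>k. a (zneg k) = cnj (a k)" "lin_var a \<le> V"
  shows "(\<integral>\<^sup>+\<omega>. ennreal (lin_obs a \<omega> ^ (2 * r)) \<partial>M) \<le> ennreal (gaussian_moment r * V ^ r)"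
proof -
  have "gaussian_moment r * lin_var a ^ r \<le> gaussian_moment r * V ^ r"
    using assms(3) lin_var_nonneg[of a]
    by (intro mult_left_mono power_mono) (auto simp: gaussian_moment_def)
  then show ?thesis
    by (rule order_trans[OF nn_integral_lin_obs_power[where a = a and r = r, OF assms(1,2)] ennreal_leI])
qed

lemma lin_var_two_point_le:
  assumes "{j. a j \<noteq> 0} \<subseteq> {k, zneg k}" "\<And>j. cmod (a j) \<le> 1"
  shows "lin_var a \<le> S k + S (zneg k)"
proof -
  have "lin_var a \<le> (\<Sum>j\<in>{j. a j \<noteq> 0}. S j)"
    unfolding lin_var_def
    using assms(2) S_nonneg by (intro sum_mono mult_left_le_one_le) (auto simp: power_le_one)
  also have "\<dots> \<le> (\<Sum>j\<in>{k, zneg k}. S j)"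
    using assms(1) S_nonneg by (intro sum_mono2) auto
  also have "\<dots> \<le> S k + S (zneg k)"
    using S_nonneg by (cases "zneg k = k") auto
  finally show ?thesis .
qed

lemma lin_var_re_coef_le: "lin_var (re_coef k) \<le> S k + S (zneg k)"
  by (rule lin_var_two_point_le[OF re_coef_support])
     (unfold re_coef_def, cases "j = k"; cases "j = zneg k"; simp)

lemma lin_var_im_coef_le: "lin_var (im_coef k) \<le> S k + S (zneg k)"
  by (rule lin_var_two_point_le[OF im_coef_support])
     (unfold im_coef_def, cases "j = k"; cases "j = zneg k"; simp)

end

section \<open>Moments of the Besov norm\<close>

lemma enn_powr_SUP_le:
  fixes u :: "nat \<Rightarrow> 'a \<Rightarrow> real" and h :: "nat \<Rightarrow> real"
  assumes u_nonneg: "\<And>n x. 0 \<le> u n x" and u_le: "\<And>n x. u n x ^ q \<le> h n"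
    and "1 \<le> p" "p \<le> real q"
  shows "enn_powr (SUP n. SUP x. ennreal (u n x)) p \<le> 1 + (\<Sum>n. ennreal (h n))"
proof (cases "(\<Sum>n. ennreal (h n)) = \<infinity>")
  case True
  then show ?thesis by simp
next
  case False
  have h_nonneg: "0 \<le> h n" for n
    using u_nonneg[of n undefined] u_le[of n undefined] by (meson order_trans zero_le_power)
  define s where "s = enn2real (\<Sum>n. ennreal (h n))"
  have s: "(\<Sum>n. ennreal (h n)) = ennreal s" "0 \<le> s"
    using False by (simp_all add: s_def less_top)
  have "h n \<le> s" for n
    using sum_le_suminf[OF summableI, where f = "\<lambda>n. ennreal (h n)" and I = "{n}"] s h_nonneg[of n]
    by simp
  then have "u n x \<le> s powr (1 / real q)" for n x
    using u_nonneg[of n x] u_le[of n x] assms(3,4)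
    by (intro le_powr_inverse_of_power_le) (auto intro: order_trans)
  then have "(SUP n. SUP x. ennreal (u n x)) \<le> ennreal (s powr (1 / real q))"
    by (intro SUP_least) simp
  then obtain b where b: "(SUP n. SUP x. ennreal (u n x)) = ennreal b" "0 \<le> b" "b \<le> s powr (1 / real q)"
    by (cases "SUP n. SUP x. ennreal (u n x)" rule: ennreal_cases) (auto simp: top_unique)
  have "b powr (real q) \<le> s"
    using b s assms powr_mono2[of "real q" b "s powr (1 / real q)"] by (simp add: powr_powr)
  moreover have "b powr p \<le> 1 + b powr (real q)"
    using b assms by (intro powr_le_one_plus_powr) auto
  ultimately have "ennreal (b powr p) \<le> ennreal (1 + s)"
    by (intro ennreal_leI) linarith
  also have "\<dots> = ennreal 1 + ennreal s"
    using s by (intro ennreal_plus) auto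
  finally show ?thesis
    unfolding enn_powr_def b(1) s(1) using b(2) by simp
qed

lemma dyadic_weight_power:
  "(2 powr ((real n - 1) * - \<kappa>)) ^ q = 2 powr (\<kappa> * q) * (2 powr (- \<kappa> * q)) ^ n"
proof -
  have "(2 powr ((real n - 1) * - \<kappa>)) ^ q = 2 powr (\<kappa> * q + real n * (- \<kappa> * q))"
    by (simp add: powr_power algebra_simps)
  also have "\<dots> = 2 powr (\<kappa> * q) * 2 powr (real n * (- \<kappa> * q))"
    by (rule powr_add)
  also have "2 powr (real n * (- \<kappa> * q)) = (2 powr (- \<kappa> * q)) ^ n"
    by (simp add: powr_power)
  finally show ?thesis .
qed

lemma summable_dyadic_weight_power:
  assumes "5 \<le> \<kappa> * real r"
  shows "summable (\<lambda>n. (2 powr ((real n - 1) * - \<kappa>)) ^ (2*r) * 256 ^ n)"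
proof -
  define \<theta> where "\<theta> = 2 powr (- \<kappa> * (2*r)) * 256"
  have "2 powr (- \<kappa> * (2*r)) \<le> 2 powr (-10)"
    using assms by (intro powr_mono) auto
  then have "0 \<le> \<theta>" "\<theta> < 1"
    by (auto simp: \<theta>_def powr_minus)
  moreover have "(2 powr ((real n - 1) * - \<kappa>)) ^ (2*r) * 256 ^ n = 2 powr (\<kappa> * (2*r)) * \<theta> ^ n" for n
    unfolding \<theta>_def dyadic_weight_power by (simp add: power_mult_distrib)
  ultimately show ?thesis
    by (simp add: summable_mult summable_geometric)
qed

lemma exists_moment_exponent:
  fixes \<kappa> p :: real
  assumes "0 < \<kappa>" "1 \<le> p"
  shows "\<exists>r\<ge>1. p \<le> real (2*r) \<and> 5 \<le> \<kappa> * real r"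
proof (intro exI conjI)
  define r where "r = nat \<lceil>p + 5 / \<kappa>\<rceil>"
  have r: "p + 5 / \<kappa> \<le> real r" and "0 < 5 / \<kappa>"
    using assms(1) unfolding r_def by (linarith, simp)
  then have "p \<le> real r"
    by linarith
  then show "r \<ge> 1" "p \<le> real (2*r)"
    using assms(2) by simp_all
  have "\<kappa> * (p + 5 / \<kappa>) \<le> \<kappa> * r"
    using r assms(1) by (intro mult_left_mono) auto
  moreover have "\<kappa> * (p + 5 / \<kappa>) = \<kappa> * p + 5" "0 \<le> \<kappa> * p"
    using assms by (simp_all add: field_simps)
  ultimately show "5 \<le> \<kappa> * real r"
    by linarith
qed

locale gaussian_lp_field = gaussian_fourier_field M Qh S + dyadic_partition chi rho
  for M :: "'w measure" and Qh S and chi rho :: "real \<times> real \<Rightarrow> real"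
begin

lemma finite_block_coef_support: "finite {k. block_coef n x k \<noteq> 0}"
  unfolding block_coef_support by (rule finite_block_support)

lemma norm_lp_block_eq_lin_obs:
  assumes "\<omega> \<in> space M"
  shows "cmod (lp_block chi rho n (Qh \<omega>) x) = \<bar>lin_obs (block_coef n x) \<omega>\<bar>"
proof -
  have "Im (\<Sum>k\<in>block_support n. block_coef n x k * Qh \<omega> k) = 0"
    using finite_block_support zneg_in_block_support_iff
    by (intro Im_sum_hermitian) (auto simp: block_coef_zneg real_field[OF assms])
  then show ?thesis
    unfolding lp_block_eq_sum lin_obs_def block_coef_support by (simp add: cmod_def)
qed

lemma lin_var_block_coef_le: "lin_var (block_coef n x) \<le> (\<Sum>k\<in>lattice_box n. S k)"
proof -
  have "lin_var (block_coef n x) = (\<Sum>k\<in>block_support n. (lp_mult chi rho n (lattice_vec k))\<^sup>2 * S k)"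
    unfolding lin_var_def block_coef_support by (simp add: block_coef_def norm_mult)
  also have "\<dots> \<le> (\<Sum>k\<in>block_support n. S k)"
    using lp_mult_nonneg lp_mult_le_1 S_nonneg
    by (intro sum_mono mult_left_le_one_le) (auto simp: power_le_one)
  also have "\<dots> \<le> (\<Sum>k\<in>lattice_box n. S k)"
    using S_nonneg by (intro sum_mono2 finite_lattice_box block_support_subset_lattice_box)
  finally show ?thesis .
qed

text \<open>
  The grid has mesh 8^-(n+1), so the Lipschitz error of a block is pi / 4^n times the l1-norm of
  its coefficients; 72 pi bounds 2 pi card (block_support n) / 4^n.
\<close>

definition block_majorant :: "nat \<Rightarrow> nat \<Rightarrow> 'w \<Rightarrow> real" where
  "block_majorant r n \<omega> =
     (\<Sum>g\<in>unit_grid (8^(n+1)). lin_obs (block_coef n g) \<omega> ^ (2*r))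
     + (72 * pi) ^ (2*r) * (\<Sum>k\<in>block_support n. lin_obs (re_coef k) \<omega> ^ (2*r) + lin_obs (im_coef k) \<omega> ^ (2*r))"

lemma borel_measurable_block_majorant [measurable]: "block_majorant r n \<in> borel_measurable M"
  unfolding block_majorant_def by measurable

lemma block_majorant_nonneg: "0 \<le> block_majorant r n \<omega>"
  unfolding block_majorant_def by (intro add_nonneg_nonneg mult_nonneg_nonneg sum_nonneg) auto

lemma grid_max_power_le:
  assumes "\<omega> \<in> space M"
  shows "(Max ((\<lambda>g. cmod (lp_block chi rho n (Qh \<omega>) g)) ` unit_grid (8^(n+1)))) ^ (2*r)
     \<le> (\<Sum>g\<in>unit_grid (8^(n+1)). lin_obs (block_coef n g) \<omega> ^ (2*r))"
proof -
  have "(Max ((\<lambda>g. cmod (lp_block chi rho n (Qh \<omega>) g)) ` unit_grid (8^(n+1)))) ^ (2*r)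
      \<le> (\<Sum>g\<in>unit_grid (8^(n+1)). cmod (lp_block chi rho n (Qh \<omega>) g) ^ (2*r))"
    by (intro Max_power_le_sum finite_unit_grid unit_grid_nonempty) auto
  then show ?thesis
    by (simp add: norm_lp_block_eq_lin_obs[OF assms] power_even_abs)
qed

lemma coef_l1_power_le:
  assumes "\<omega> \<in> space M" "r \<ge> 1"
  shows "(pi / 4^n * (\<Sum>k\<in>block_support n. cmod (Qh \<omega> k))) ^ (2*r)
     \<le> (72 * pi) ^ (2*r) * (\<Sum>k\<in>block_support n. lin_obs (re_coef k) \<omega> ^ (2*r) + lin_obs (im_coef k) \<omega> ^ (2*r))"
proof -
  let ?q = "2*r" and ?B = "block_support n"
  let ?a = "\<lambda>k. \<bar>lin_obs (re_coef k) \<omega>\<bar> + \<bar>lin_obs (im_coef k) \<omega>\<bar>"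
  let ?\<Sigma> = "\<Sum>k\<in>?B. lin_obs (re_coef k) \<omega> ^ ?q + lin_obs (im_coef k) \<omega> ^ ?q"
  have "(\<Sum>k\<in>?B. cmod (Qh \<omega> k)) \<le> (\<Sum>k\<in>?B. ?a k)"
    by (intro sum_mono) (simp add: lin_obs_re_coef[OF assms(1)] lin_obs_im_coef[OF assms(1)] cmod_le)
  then have "(\<Sum>k\<in>?B. cmod (Qh \<omega> k)) ^ ?q \<le> (\<Sum>k\<in>?B. ?a k) ^ ?q"
    by (intro power_mono sum_nonneg) auto
  also have "\<dots> \<le> real (card ?B) ^ ?q * (\<Sum>k\<in>?B. ?a k ^ ?q)"
    using assms(2) by (intro sum_power_le finite_block_support) auto
  also have "\<dots> \<le> real (card ?B) ^ ?q * (\<Sum>k\<in>?B. 2 ^ ?q *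
      (lin_obs (re_coef k) \<omega> ^ ?q + lin_obs (im_coef k) \<omega> ^ ?q))"
    by (intro mult_left_mono sum_mono order_trans[OF power_add_le]) (auto simp: power_even_abs)
  also have "\<dots> = (2 * real (card ?B)) ^ ?q * ?\<Sigma>"
    by (simp add: sum_distrib_left power_mult_distrib mult_ac)
  finally have "(pi / 4^n * (\<Sum>k\<in>?B. cmod (Qh \<omega> k))) ^ ?q \<le> (pi / 4^n) ^ ?q * ((2 * real (card ?B)) ^ ?q * ?\<Sigma>)"
    unfolding power_mult_distrib[of "pi / 4^n"] by (intro mult_left_mono) auto
  also have "\<dots> = (2 * pi * real (card ?B) / 4^n) ^ ?q * ?\<Sigma>"
    by (simp add: power_mult_distrib power_divide)
  also have "\<dots> \<le> (72 * pi) ^ ?q * ?\<Sigma>"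
    using card_block_support[of n]
    by (intro mult_right_mono[OF power_mono] sum_nonneg add_nonneg_nonneg)
       (auto simp: field_simps zero_le_even_power)
  finally show ?thesis .
qed

lemma norm_lp_block_power_le:
  assumes "\<omega> \<in> space M" "r \<ge> 1"
  shows "cmod (lp_block chi rho n (Qh \<omega>) x) ^ (2*r) \<le> 2 ^ (2*r) * block_majorant r n \<omega>"
proof -
  let ?q = "2*r" and ?G = "unit_grid (8^(n+1))"
  define Mx where "Mx = Max ((\<lambda>g. cmod (lp_block chi rho n (Qh \<omega>) g)) ` ?G)"
  define Y where "Y = pi / 4^n * (\<Sum>k\<in>block_support n. cmod (Qh \<omega> k))"
  have "0 \<le> Mx"
  proof -
    obtain g where "g \<in> ?G"
      using unit_grid_nonempty[of "8^(n+1)"] by auto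
    then have "cmod (lp_block chi rho n (Qh \<omega>) g) \<le> Mx"
      unfolding Mx_def by (intro Max_ge finite_imageI finite_unit_grid imageI)
    then show ?thesis
      using norm_ge_zero order_trans by blast
  qed
  have "4 * pi * 2^(n+1) / real ((8::nat)^(n+1)) = pi / 4^n"
    by (simp add: field_simps power_mult_distrib[symmetric])
  then have "cmod (lp_block chi rho n (Qh \<omega>) x) \<le> Mx + Y"
    using norm_lp_block_le_grid[of "8^(n+1)" n "Qh \<omega>" x] unfolding Mx_def Y_def by simp
  then have "cmod (lp_block chi rho n (Qh \<omega>) x) ^ ?q \<le> (Mx + Y) ^ ?q"
    by (intro power_mono) auto
  also have "\<dots> \<le> 2 ^ ?q * (Mx ^ ?q + Y ^ ?q)"
    using \<open>0 \<le> Mx\<close> by (intro power_add_le) (auto simp: Y_def sum_nonneg)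
  also have "\<dots> \<le> 2 ^ ?q * block_majorant r n \<omega>"
    unfolding block_majorant_def Mx_def Y_def
    using grid_max_power_le[OF assms(1)] coef_l1_power_le[OF assms]
    by (intro mult_left_mono add_mono) auto
  finally show ?thesis .
qed

lemma nn_integral_grid_part:
  "(\<integral>\<^sup>+\<omega>. ennreal (\<Sum>g\<in>unit_grid (8^(n+1)). lin_obs (block_coef n g) \<omega> ^ (2*r)) \<partial>M)
     \<le> ennreal (64 ^ (n+1) * (gaussian_moment r * (\<Sum>k\<in>lattice_box n. S k) ^ r))"
proof -
  have "(\<integral>\<^sup>+\<omega>. ennreal (\<Sum>g\<in>unit_grid (8^(n+1)). lin_obs (block_coef n g) \<omega> ^ (2*r)) \<partial>M)
      \<le> ennreal (real (card (unit_grid (8^(n+1)))) * (gaussian_moment r * (\<Sum>k\<in>lattice_box n. S k) ^ r))"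
    using finite_block_coef_support block_coef_zneg lin_var_block_coef_le S_nonneg
    by (intro nn_integral_sum_le_card finite_unit_grid nn_integral_lin_obs_power_le)
       (auto simp: zero_le_even_power gaussian_moment_def sum_nonneg)
  also have "\<dots> \<le> ennreal (64 ^ (n+1) * (gaussian_moment r * (\<Sum>k\<in>lattice_box n. S k) ^ r))"
  proof (intro ennreal_leI mult_right_mono)
    have "card (unit_grid (8^(n+1))) \<le> 64 ^ (n+1)"
      using card_unit_grid[of "8^(n+1)"] by (simp add: power_mult_distrib[symmetric])
    then show "real (card (unit_grid (8^(n+1)))) \<le> 64 ^ (n+1)"
      by (metis of_nat_le_iff of_nat_numeral of_nat_power)
  qed (use S_nonneg in \<open>auto simp: gaussian_moment_def sum_nonneg\<close>)
  finally show ?thesis .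
qed

lemma nn_integral_coef_part:
  assumes "\<And>k. S k \<le> V"
  shows "(\<integral>\<^sup>+\<omega>. ennreal (\<Sum>k\<in>block_support n. lin_obs (re_coef k) \<omega> ^ (2*r) + lin_obs (im_coef k) \<omega> ^ (2*r)) \<partial>M)
     \<le> ennreal (36 * 4 ^ n * (2 * (gaussian_moment r * (2 * V) ^ r)))"
proof -
  have V: "0 \<le> V"
    using S_nonneg assms order_trans by blast
  have "(\<integral>\<^sup>+\<omega>. ennreal (lin_obs (re_coef k) \<omega> ^ (2*r) + lin_obs (im_coef k) \<omega> ^ (2*r)) \<partial>M)
      \<le> ennreal (2 * (gaussian_moment r * (2 * V) ^ r))" for k
  proof -
    have "(\<integral>\<^sup>+\<omega>. ennreal (lin_obs (re_coef k) \<omega> ^ (2*r) + lin_obs (im_coef k) \<omega> ^ (2*r)) \<partial>M)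
        = (\<integral>\<^sup>+\<omega>. ennreal (lin_obs (re_coef k) \<omega> ^ (2*r)) \<partial>M)
          + (\<integral>\<^sup>+\<omega>. ennreal (lin_obs (im_coef k) \<omega> ^ (2*r)) \<partial>M)"
      by (subst nn_integral_add[symmetric]) (auto intro!: nn_integral_cong simp: zero_le_even_power)
    also have "\<dots> \<le> ennreal (gaussian_moment r * (2 * V) ^ r) + ennreal (gaussian_moment r * (2 * V) ^ r)"
      using lin_var_re_coef_le[of k] lin_var_im_coef_le[of k] assms[of k] assms[of "zneg k"]
      by (intro add_mono nn_integral_lin_obs_power_le finite_re_coef_support finite_im_coef_support
            re_coef_zneg im_coef_zneg) auto
    also have "\<dots> = ennreal (2 * (gaussian_moment r * (2 * V) ^ r))"
      using V by (simp add: gaussian_moment_def flip: ennreal_plus)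
    finally show ?thesis .
  qed
  then have "(\<integral>\<^sup>+\<omega>. ennreal (\<Sum>k\<in>block_support n. lin_obs (re_coef k) \<omega> ^ (2*r) + lin_obs (im_coef k) \<omega> ^ (2*r)) \<partial>M)
      \<le> ennreal (real (card (block_support n)) * (2 * (gaussian_moment r * (2 * V) ^ r)))"
    using V by (intro nn_integral_sum_le_card finite_block_support)
      (auto simp: zero_le_even_power gaussian_moment_def)
  also have "\<dots> \<le> ennreal (36 * 4 ^ n * (2 * (gaussian_moment r * (2 * V) ^ r)))"
    using card_block_support[of n] V by (intro ennreal_leI mult_right_mono) (auto simp: gaussian_moment_def)
  finally show ?thesis .
qed

lemma nn_integral_block_majorant:
  "(\<integral>\<^sup>+\<omega>. ennreal (block_majorant r n \<omega>) \<partial>M)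
    = (\<integral>\<^sup>+\<omega>. ennreal (\<Sum>g\<in>unit_grid (8^(n+1)). lin_obs (block_coef n g) \<omega> ^ (2*r)) \<partial>M)
      + ennreal ((72 * pi) ^ (2*r)) * (\<integral>\<^sup>+\<omega>. ennreal (\<Sum>k\<in>block_support n.
          lin_obs (re_coef k) \<omega> ^ (2*r) + lin_obs (im_coef k) \<omega> ^ (2*r)) \<partial>M)"
proof -
  let ?G = "\<lambda>\<omega>. \<Sum>g\<in>unit_grid (8^(n+1)). lin_obs (block_coef n g) \<omega> ^ (2*r)"
  let ?R = "\<lambda>\<omega>. \<Sum>k\<in>block_support n. lin_obs (re_coef k) \<omega> ^ (2*r) + lin_obs (im_coef k) \<omega> ^ (2*r)"
  have "0 \<le> ?G \<omega>" "0 \<le> ?R \<omega>" for \<omega>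
    by (auto intro!: sum_nonneg simp: zero_le_even_power)
  then have "ennreal (block_majorant r n \<omega>) = ennreal (?G \<omega>) + ennreal ((72 * pi) ^ (2*r)) * ennreal (?R \<omega>)" for \<omega>
    unfolding block_majorant_def by (simp only: ennreal_plus ennreal_mult zero_le_power pi_ge_zero mult_nonneg_nonneg)
  then show ?thesis
    by (simp add: nn_integral_add nn_integral_cmult)
qed

lemma nn_integral_block_majorant_le:
  assumes V: "\<And>k. S k \<le> V" and C: "(\<Sum>k\<in>lattice_box n. S k) ^ r \<le> C * 4 ^ n"
  shows "(\<integral>\<^sup>+\<omega>. ennreal (block_majorant r n \<omega>) \<partial>M)
    \<le> ennreal ((64 * gaussian_moment r * C + 72 * (72 * pi) ^ (2*r) * gaussian_moment r * (2 * V) ^ r) * 256 ^ n)"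
proof -
  let ?K = "(72 * pi) ^ (2*r)" and ?m = "gaussian_moment r"
  have V0: "0 \<le> V"
    using S_nonneg V order_trans by blast
  have m0: "0 \<le> ?m"
    by (simp add: gaussian_moment_def)
  have "(\<integral>\<^sup>+\<omega>. ennreal (block_majorant r n \<omega>) \<partial>M)
     \<le> ennreal (64 ^ (n+1) * (?m * (\<Sum>k\<in>lattice_box n. S k) ^ r))
      + ennreal ?K * ennreal (36 * 4 ^ n * (2 * (?m * (2 * V) ^ r)))"
    unfolding nn_integral_block_majorant
    by (intro add_mono mult_left_mono nn_integral_grid_part nn_integral_coef_part V) simp
  also have "\<dots> = ennreal (64 ^ (n+1) * (?m * (\<Sum>k\<in>lattice_box n. S k) ^ r)
      + ?K * (36 * 4 ^ n * (2 * (?m * (2 * V) ^ r))))"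
  proof -
    have "ennreal a + ennreal K * ennreal b = ennreal (a + K * b)" if "0 \<le> a" "0 \<le> K" "0 \<le> b"
      for a K b :: real
      using that by (simp add: ennreal_mult)
    then show ?thesis
      using V0 m0 S_nonneg by (simp add: sum_nonneg)
  qed
  also have "\<dots> \<le> ennreal ((64 * ?m * C + 72 * ?K * ?m * (2 * V) ^ r) * 256 ^ n)"
  proof (intro ennreal_leI)
    have "64 ^ (n+1) * (?m * (\<Sum>k\<in>lattice_box n. S k) ^ r) \<le> 64 ^ (n+1) * (?m * (C * 4 ^ n))"
      using C m0 by (intro mult_left_mono) auto
    also have "\<dots> = 64 * ?m * C * 256 ^ n"
      by (simp add: power_mult_distrib[symmetric])
    finally have grid: "64 ^ (n+1) * (?m * (\<Sum>k\<in>lattice_box n. S k) ^ r) \<le> 64 * ?m * C * 256 ^ n" .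
    have "?K * (36 * 4 ^ n * (2 * (?m * (2 * V) ^ r))) \<le> ?K * (36 * 256 ^ n * (2 * (?m * (2 * V) ^ r)))"
      using V0 m0 by (intro mult_left_mono mult_right_mono power_mono) auto
    then show "64 ^ (n+1) * (?m * (\<Sum>k\<in>lattice_box n. S k) ^ r)
        + ?K * (36 * 4 ^ n * (2 * (?m * (2 * V) ^ r))) \<le> (64 * ?m * C + 72 * ?K * ?m * (2 * V) ^ r) * 256 ^ n"
      using grid by (simp add: algebra_simps)
  qed
  finally show ?thesis .
qed

lemma nn_integral_enn_powr_besov_le:
  assumes "r \<ge> 1" "1 \<le> p" "p \<le> real (2*r)"
  shows "(\<integral>\<^sup>+ \<omega>. enn_powr (besov_inf_norm chi rho (- \<kappa>) (Qh \<omega>)) p \<partial>M)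
    \<le> 1 + (\<Sum>n. ennreal ((2 powr ((real n - 1) * - \<kappa>)) ^ (2*r) * 2 ^ (2*r))
              * (\<integral>\<^sup>+ \<omega>. ennreal (block_majorant r n \<omega>) \<partial>M))"
proof -
  define c where "c n = (2 powr ((real n - 1) * - \<kappa>)) ^ (2*r) * 2 ^ (2*r)" for n
  have "enn_powr (besov_inf_norm chi rho (- \<kappa>) (Qh \<omega>)) p \<le> 1 + (\<Sum>n. ennreal (c n * block_majorant r n \<omega>))"
    if "\<omega> \<in> space M" for \<omega>
    unfolding besov_inf_norm_def
  proof (rule enn_powr_SUP_le[OF _ _ assms(2,3)])
    fix n x
    show "(2 powr ((real n - 1) * - \<kappa>) * cmod (lp_block chi rho n (Qh \<omega>) x)) ^ (2*r)
        \<le> c n * block_majorant r n \<omega>"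
      unfolding c_def power_mult_distrib mult.assoc
      by (intro mult_left_mono norm_lp_block_power_le that assms) simp
  qed simp
  then have "(\<integral>\<^sup>+ \<omega>. enn_powr (besov_inf_norm chi rho (- \<kappa>) (Qh \<omega>)) p \<partial>M)
      \<le> (\<integral>\<^sup>+ \<omega>. 1 + (\<Sum>n. ennreal (c n * block_majorant r n \<omega>)) \<partial>M)"
    by (intro nn_integral_mono) auto
  also have "\<dots> = 1 + (\<Sum>n. \<integral>\<^sup>+ \<omega>. ennreal (c n * block_majorant r n \<omega>) \<partial>M)"
    by (simp add: nn_integral_add nn_integral_suminf emeasure_space_1)
  also have "\<dots> = 1 + (\<Sum>n. ennreal (c n) * (\<integral>\<^sup>+ \<omega>. ennreal (block_majorant r n \<omega>) \<partial>M))"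
    by (simp add: ennreal_mult c_def block_majorant_nonneg nn_integral_cmult)
  finally show ?thesis
    unfolding c_def .
qed

theorem besov_moment_finite:
  assumes decay: "\<And>t. 0 < t \<Longrightarrow> t < 1 \<Longrightarrow> \<exists>K. \<forall>k. S k \<le> K * bracket_sq k powr (-t)"
    and "0 < \<kappa>" "1 \<le> p"
  shows "(\<integral>\<^sup>+ \<omega>. enn_powr (besov_inf_norm chi rho (- \<kappa>) (Qh \<omega>)) p \<partial>M) < \<infinity>"
proof -
  obtain r where r: "r \<ge> 1" "p \<le> real (2*r)" "5 \<le> \<kappa> * real r"
    using exists_moment_exponent[OF assms(2,3)] by blast
  obtain K where "\<And>k. S k \<le> K * bracket_sq k powr (-(1/2))"
    using decay[of "1/2"] by auto
  then obtain V where V: "0 \<le> V" "\<And>k. S k \<le> V"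
    using bounded_of_bracket_decay[of S K "1/2"] by auto
  obtain C where C: "0 \<le> C" "\<And>n. (\<Sum>k\<in>lattice_box n. S k) ^ r \<le> C * 4 ^ n"
    using sum_lattice_box_power_le[OF S_nonneg decay r(1)] by blast
  define A where "A = 64 * gaussian_moment r * C + 72 * (72 * pi) ^ (2*r) * gaussian_moment r * (2 * V) ^ r"
  define c where "c n = (2 powr ((real n - 1) * - \<kappa>)) ^ (2*r) * 2 ^ (2*r)" for n
  have "0 \<le> A"
    using V C unfolding A_def by (simp add: gaussian_moment_def)
  have "(\<integral>\<^sup>+ \<omega>. enn_powr (besov_inf_norm chi rho (- \<kappa>) (Qh \<omega>)) p \<partial>M)
      \<le> 1 + (\<Sum>n. ennreal (c n) * (\<integral>\<^sup>+ \<omega>. ennreal (block_majorant r n \<omega>) \<partial>M))"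
    unfolding c_def by (rule nn_integral_enn_powr_besov_le[OF r(1) assms(3) r(2)])
  also have "\<dots> \<le> 1 + (\<Sum>n. ennreal (c n) * ennreal (A * 256 ^ n))"
    unfolding A_def by (intro add_left_mono suminf_le summableI mult_left_mono nn_integral_block_majorant_le V C) simp
  also have "\<dots> = 1 + (\<Sum>n. ennreal (2 ^ (2*r) * A * ((2 powr ((real n - 1) * - \<kappa>)) ^ (2*r) * 256 ^ n)))"
  proof -
    have "ennreal (c n) * ennreal (A * 256 ^ n) = ennreal (c n * (A * 256 ^ n))" for n
      by (rule ennreal_mult'[symmetric]) (simp add: c_def)
    then show ?thesis
      by (simp add: c_def mult_ac)
  qed
  also have "\<dots> < \<infinity>"
    using \<open>0 \<le> A\<close> summable_mult[OF summable_dyadic_weight_power[OF r(3)], of "2 ^ (2*r) * A"]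
    by (simp add: less_top ennreal_suminf_neq_top)
  finally show ?thesis .
qed

end

theorem lemma4p5:
  fixes M :: "'w measure" and Qh :: "'w \<Rightarrow> int \<times> int \<Rightarrow> complex"
    and m \<kappa> p :: real and chi rho :: "real \<times> real \<Rightarrow> real"
  assumes "prob_space M"
    and "m > 0"
    and real_field: "\<forall>\<omega>\<in>space M. \<forall>k. Qh \<omega> (zneg k) = cnj (Qh \<omega> k)"
    and gaussian: "\<And>a :: int \<times> int \<Rightarrow> complex.
        finite {k. a k \<noteq> 0} \<Longrightarrow> (\<forall>k. a (zneg k) = cnj (a k)) \<Longrightarrow> (\<exists>k. a k \<noteq> 0) \<Longrightarrow>
        distributed M lborel (\<lambda>\<omega>. Re (\<Sum>k\<in>{k. a k \<noteq> 0}. a k * Qh \<omega> k))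
          (\<lambda>x. ennreal (normal_density 0
             (sqrt (\<Sum>k\<in>{k. a k \<noteq> 0}. (cmod (a k))\<^sup>2 * Ghat m k)) x))"
    and "\<kappa> > 0" and "p \<ge> 1"
    and "dyadic_pou chi rho"
  shows "(\<integral>\<^sup>+ \<omega>. enn_powr (besov_inf_norm chi rho (- \<kappa>) (Qh \<omega>)) p \<partial>M) < \<infinity>"
proof -
  interpret gaussian_lp_field M Qh "Ghat m" chi rho
    by (intro gaussian_lp_field.intro gaussian_fourier_field.intro gaussian_fourier_field_axioms.intro
        dyadic_partition.intro) (use assms Ghat_nonneg in auto)
  show ?thesis
    by (rule besov_moment_finite[OF Ghat_decay]) (use assms in auto)
qed

end
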